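(* For every $n\in\mathbb{N}$, $\phi(\omega^{2n})=P_n(1)$ and $\phi(\omega^{2n+1})=0$.
   Context: $\omega=a+a^*$ is the standard V-monotone Gaussian operator on the continuous V-monotone Fock space $\mathcal{CV}=\mathbb{C}\Lambda\oplus\bigoplus_{n\ge1}L^2(\mathcal X_n)$, with vacuum state $\phi(T)=\langle T\Lambda,\Lambda\rangle$, where $\mathcal X_n=\bigcup_{m=1}^n\{(x_1,\dots,x_n)\in\mathbb{R}^n:x_1>\dots>x_m<\dots<x_n\}$; $a\Lambda=\mathbb 1_{[0,1]}$, $(ag)(x,x_1,\dots,x_n)=\mathbb 1_{[0,1]}(x)\mathbb 1_{\mathcal X_{n+1}}(x,x_1,\dots,x_n)g(x_1,\dots,x_n)$, and $a^*$ is its adjoint, explicitly $a^*\Lambda=0$, $a^*g=(\int_0^1 g)\Lambda$ for $g\in L^2(\mathcal X_1)$, and $(a^*g)(\vec x)=\mathbb 1_{\mathcal X_{n,1}}(\vec x)\int_0^{x_1}g(x,\vec x)dx+\int_{x_1}^1 g(x,\vec x)dx$ for $g\in L^2(\mathcal X_{n+1})$, where $\mathcal X_{n,1}=\{x_1<\dots<x_n\}$. The polynomials $P_n,Q_n$ on $[0,1]$ are defined by $Q_0=P_0=1$, $Q_{n+1}(x)=\sum_{m=0}^n\big[\int_x^1Q_m(t)dt\big]Q_{n-m}(x)$, $P_{n+1}(x)=\sum_{m=0}^n\big[\int_0^xP_m(t)dt+\int_x^1Q_m(t)dt\big]P_{n-m}(x)$. *)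

theory Defs
  imports "HOL-Analysis.Analysis"
begin

(* A vector of the continuous V-monotone Fock space CV = C Lambda (+) (+)_{n>=1} L^2(X_n)
   is represented by a function on real lists: the value at [] is the coefficient of the
   vacuum Lambda, and the restriction to lists of length n >= 1 is (a representative of)
   the component in L^2(X_n). Representatives are kept supported on X_n. *)
type_synonym fock_vec = "real list \<Rightarrow> real"

definition in_X :: "real list \<Rightarrow> bool" where
  "in_X xs \<longleftrightarrow> (\<exists>m. 1 \<le> m \<and> m \<le> length xs
      \<and> (\<forall>i. i + 1 < m \<longrightarrow> xs ! i > xs ! (i + 1))
      \<and> (\<forall>i. m \<le> i + 1 \<and> i + 1 < length xs \<longrightarrow> xs ! i < xs ! (i + 1)))"

definition in_X1 :: "real list \<Rightarrow> bool" where
  "in_X1 xs \<longleftrightarrow> (\<forall>i. i + 1 < length xs \<longrightarrow> xs ! i < xs ! (i + 1))"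

definition vac :: fock_vec where
  "vac xs = (if xs = [] then 1 else 0)"

fun creation :: "fock_vec \<Rightarrow> fock_vec" where
  "creation F [] = 0"
| "creation F (x # xs) =
     (if x \<in> {0..1} \<and> in_X (x # xs) then F xs else 0)"

fun annihilation :: "fock_vec \<Rightarrow> fock_vec" where
  "annihilation F [] = integral {0..1} (\<lambda>x. F [x])"
| "annihilation F (y # ys) =
     (if in_X (y # ys) then
        (if in_X1 (y # ys) then integral {0..y} (\<lambda>x. F (x # y # ys)) else 0)
        + integral {y..1} (\<lambda>x. F (x # y # ys))
      else 0)"

definition omega :: "fock_vec \<Rightarrow> fock_vec" where
  "omega F = (\<lambda>xs. creation F xs + annihilation F xs)"

(* vacuum state phi(T) = <T Lambda, Lambda>, i.e. the Lambda-coefficient of T Lambda *)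
definition vacuum_state :: "(fock_vec \<Rightarrow> fock_vec) \<Rightarrow> real" where
  "vacuum_state T = T vac []"

fun Qpoly :: "nat \<Rightarrow> real \<Rightarrow> real" where
  "Qpoly 0 = (\<lambda>x. 1)"
| "Qpoly (Suc n) = (\<lambda>x. \<Sum>m\<le>n. integral {x..1} (Qpoly m) * Qpoly (n - m) x)"

fun Ppoly :: "nat \<Rightarrow> real \<Rightarrow> real" where
  "Ppoly 0 = (\<lambda>x. 1)"
| "Ppoly (Suc n) = (\<lambda>x. \<Sum>m\<le>n.
      (integral {0..x} (Ppoly m) + integral {x..1} (Qpoly m)) * Ppoly (n - m) x)"

end

theory Submission imports Defs begin

text \<open>
  Let \<open>W j x b\<close> (\<open>dyck_weight\<close>) be the total weight of the ways in which \<open>j\<close>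
  applications of \<open>\<omega>\<close> create particles on top of a particle at position \<open>x\<close> and
  annihilate them all again, where \<open>b\<close> records whether the configuration starting at \<open>x\<close>
  is increasing (only then may the particle created directly above \<open>x\<close> sit below \<open>x\<close>).
  Splitting by the steps that act on the leading particle gives \<open>(\<omega>^k \<Lambda>)(x, xs) = \<Sum>j<k. W j x b * (\<omega>^(k-1-j) \<Lambda>)(xs)\<close>,
  and the vacuum coefficient of \<open>\<omega>^k \<Lambda>\<close> is \<open>W k 1 True\<close>. The weights obey a first-return
  (Dyck path) recursion in which the weight of an arch is an integral of a smaller \<open>W\<close>.
  Odd weights vanish, and after halving the index the recursion for the even weights is
  exactly the one defining \<open>P\<^sub>n\<close> (for \<open>b\<close> true) and \<open>Q\<^sub>n\<close> (for \<open>b\<close> false).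
\<close>

fun dyck_weight :: "nat \<Rightarrow> real \<Rightarrow> bool \<Rightarrow> real" where
  "dyck_weight 0 x b = 1"
| "dyck_weight (Suc 0) x b = 0"
| "dyck_weight (Suc (Suc J)) x b =
     (\<Sum>j\<le>J. ((if b then integral {0..x} (\<lambda>y. dyck_weight j y True) else 0)
               + integral {x..1} (\<lambda>y. dyck_weight j y False)) * dyck_weight (J - j) x b)"

definition arch_weight :: "nat \<Rightarrow> real \<Rightarrow> bool \<Rightarrow> real" where
  "arch_weight j x b =
     (if b then integral {0..x} (\<lambda>y. dyck_weight j y True) else 0)
     + integral {x..1} (\<lambda>y. dyck_weight j y False)"

lemma dyck_weight_Suc_Suc:
  "dyck_weight (Suc (Suc J)) x b = (\<Sum>j\<le>J. arch_weight j x b * dyck_weight (J - j) x b)"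
  by (simp add: arch_weight_def)

lemma continuous_on_dyck_weight: "continuous_on {0..1} (\<lambda>x. dyck_weight j x b)"
proof (induction j arbitrary: b rule: less_induct)
  case (less j)
  consider "j < 2" | J where "j = Suc (Suc J)"
    by (metis add_2_eq_Suc le_add_diff_inverse not_less)
  then show ?case
  proof cases
    case 1
    then show ?thesis by (auto dest: less_2_cases)
  next
    case (2 J)
    have arch: "continuous_on {0..1} (\<lambda>x. arch_weight i x b)" if "i \<le> J" for i
    proof -
      have "(\<lambda>y. dyck_weight i y c) integrable_on {0..1}" for c
        using less.IH[of i] that 2 by (intro integrable_continuous_interval) auto
      then have "continuous_on {0..1} (\<lambda>x. integral {0..x} (\<lambda>y. dyck_weight i y True))"
        "continuous_on {0..1} (\<lambda>x. integral {x..1} (\<lambda>y. dyck_weight i y False))"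
        by (simp_all add: indefinite_integral_continuous_1 indefinite_integral_continuous_1')
      then show ?thesis
        unfolding arch_weight_def by (cases b) (auto intro!: continuous_intros)
    qed
    show ?thesis
      unfolding 2 dyck_weight_Suc_Suc
      using arch less.IH 2 by (intro continuous_on_sum continuous_on_mult) auto
  qed
qed

lemma dyck_weight_integrable_on:
  "{s..t} \<subseteq> {0..1} \<Longrightarrow> (\<lambda>y. dyck_weight j y b) integrable_on {s..t}"
  by (rule integrable_subinterval_real[OF integrable_continuous_interval[OF continuous_on_dyck_weight]])

lemma integral_sum_dyck_weight:
  assumes "0 \<le> s" "t \<le> 1"
  shows "integral {s..t} (\<lambda>y. \<Sum>j<k. dyck_weight j y b * a j)
       = (\<Sum>j<k. integral {s..t} (\<lambda>y. dyck_weight j y b) * a j)"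
  using assms by (subst integral_sum) (auto intro!: integrable_on_mult_left dyck_weight_integrable_on)

lemma dyck_weight_odd: "odd j \<Longrightarrow> dyck_weight j x b = 0"
proof (induction j arbitrary: x b rule: less_induct)
  case (less j)
  show ?case
  proof (cases "j < 2")
    case True
    with less.prems show ?thesis by (cases j) auto
  next
    case False
    then obtain J where J: "j = Suc (Suc J)" by (metis add_2_eq_Suc le_add_diff_inverse not_less)
    have term_zero: "arch_weight i x b * dyck_weight (J - i) x b = 0" if "i \<le> J" for i
    proof (cases "odd i")
      case True
      then show ?thesis using less.IH[of i] that J by (simp add: arch_weight_def)
    next
      case False
      then show ?thesis using less.IH[of "J - i"] less.prems that J by simp
    qed
    then show ?thesis unfolding J dyck_weight_Suc_Suc by (intro sum.neutral) auto
  qed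
qed

lemma sum_atMost_double:
  "(\<Sum>j\<le>2*m. f j) = (\<Sum>p\<le>m. f (2*p)) + (\<Sum>p<m. f (2*p+1))"
  for f :: "nat \<Rightarrow> 'a::comm_monoid_add"
proof (induction m)
  case (Suc m)
  have "2 * Suc m = Suc (Suc (2*m))" by simp
  then show ?case using Suc by (simp add: sum.atMost_Suc ac_simps)
qed simp

definition PQpoly :: "nat \<Rightarrow> real \<Rightarrow> bool \<Rightarrow> real" where
  "PQpoly n x b = (if b then Ppoly n x else Qpoly n x)"

lemma PQpoly_Suc:
  "PQpoly (Suc n) x b =
     (\<Sum>m\<le>n. ((if b then integral {0..x} (Ppoly m) else 0) + integral {x..1} (Qpoly m))
             * PQpoly (n - m) x b)"
  by (cases b) (simp_all add: PQpoly_def)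

lemma dyck_weight_even: "dyck_weight (2*n) x b = PQpoly n x b"
proof (induction n arbitrary: x b rule: less_induct)
  case (less n)
  show ?case
  proof (cases n)
    case 0
    then show ?thesis by (simp add: PQpoly_def)
  next
    case (Suc m)
    have arch_even: "arch_weight (2*p) x b =
        (if b then integral {0..x} (Ppoly p) else 0) + integral {x..1} (Qpoly p)" if "p \<le> m" for p
    proof -
      have "(\<lambda>y. dyck_weight (2*p) y c) = (\<lambda>y. PQpoly p y c)" for c
        using less.IH[of p] that Suc by auto
      then show ?thesis by (simp add: arch_weight_def PQpoly_def)
    qed
    have "dyck_weight (2*n) x b = (\<Sum>j\<le>2*m. arch_weight j x b * dyck_weight (2*m - j) x b)"
      using Suc dyck_weight_Suc_Suc[of "2*m"] by simp
    also have "\<dots> = (\<Sum>p\<le>m. arch_weight (2*p) x b * dyck_weight (2*(m - p)) x b)"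
      by (simp add: sum_atMost_double arch_weight_def dyck_weight_odd diff_mult_distrib2)
    also have "\<dots> = PQpoly n x b"
      using Suc less.IH[of "m - _"] by (simp add: PQpoly_Suc arch_even)
    finally show ?thesis .
  qed
qed

lemma in_X_singleton: "in_X [x]"
  unfolding in_X_def by (rule exI[of _ 1]) auto

lemma in_X1_singleton: "in_X1 [x]"
  unfolding in_X1_def by auto

lemma in_X1_Cons_Cons: "in_X1 (a # b # l) \<longleftrightarrow> a < b \<and> in_X1 (b # l)"
  unfolding in_X1_def
proof safe
  fix i assume H: "\<forall>i. i + 1 < length (a # b # l) \<longrightarrow> (a # b # l) ! i < (a # b # l) ! (i + 1)"
  show "a < b" using H[rule_format, of 0] by simp
  assume "i + 1 < length (b # l)"
  then show "(b # l) ! i < (b # l) ! (i + 1)" using H[rule_format, of "Suc i"] by simp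
next
  fix i assume "a < b" and "\<forall>i. i + 1 < length (b # l) \<longrightarrow> (b # l) ! i < (b # l) ! (i + 1)"
    and "i + 1 < length (a # b # l)"
  then show "(a # b # l) ! i < (a # b # l) ! (i + 1)"
    by (cases i) auto
qed

lemma in_X_Cons_Cons_imp:
  assumes "in_X (y # x # l)"
  shows "(x < y \<and> in_X (x # l)) \<or> (y < x \<and> in_X1 (x # l))"
proof -
  obtain m where m1: "1 \<le> m" and m2: "m \<le> length (y # x # l)"
    and D: "\<forall>i. i + 1 < m \<longrightarrow> (y # x # l) ! i > (y # x # l) ! (i + 1)"
    and I: "\<forall>i. m \<le> i + 1 \<and> i + 1 < length (y # x # l) \<longrightarrow> (y # x # l) ! i < (y # x # l) ! (i + 1)"
    using assms unfolding in_X_def by blast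
  show ?thesis
  proof (cases "m = 1")
    case True
    have "y < x" using I[rule_format, of 0] True by simp
    moreover have "in_X1 (x # l)"
      unfolding in_X1_def using I True by (auto dest: spec[of _ "Suc _"])
    ultimately show ?thesis by blast
  next
    case False
    then have m: "2 \<le> m" using m1 by simp
    have "x < y" using D[rule_format, of 0] m by simp
    moreover have "in_X (x # l)" unfolding in_X_def
    proof (rule exI[of _ "m - 1"], intro conjI allI impI)
      show "1 \<le> m - 1" "m - 1 \<le> length (x # l)" using m m2 by simp_all
      fix i
      show "i + 1 < m - 1 \<Longrightarrow> (x # l) ! (i + 1) < (x # l) ! i"
        using D[rule_format, of "Suc i"] by simp
      assume "m - 1 \<le> i + 1 \<and> i + 1 < length (x # l)"
      then have "m \<le> Suc i + 1 \<and> Suc i + 1 < length (y # x # l)" by (cases m) auto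
      then show "(x # l) ! i < (x # l) ! (i + 1)"
        using I[rule_format, of "Suc i"] by simp
    qed
    ultimately show ?thesis by blast
  qed
qed

lemma in_X_Cons_Cons:
  "in_X (y # x # l) \<longleftrightarrow> (x < y \<and> in_X (x # l)) \<or> (y < x \<and> in_X1 (x # l))"
proof
  assume "(x < y \<and> in_X (x # l)) \<or> (y < x \<and> in_X1 (x # l))"
  then show "in_X (y # x # l)"
  proof
    assume A: "x < y \<and> in_X (x # l)"
    then obtain m where m1: "1 \<le> m" and m2: "m \<le> length (x # l)"
      and D: "\<forall>i. i + 1 < m \<longrightarrow> (x # l) ! i > (x # l) ! (i + 1)"
      and I: "\<forall>i. m \<le> i + 1 \<and> i + 1 < length (x # l) \<longrightarrow> (x # l) ! i < (x # l) ! (i + 1)"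
      unfolding in_X_def by blast
    show ?thesis unfolding in_X_def
    proof (rule exI[of _ "m + 1"], intro conjI allI impI)
      show "1 \<le> m + 1" "m + 1 \<le> length (y # x # l)" using m2 by simp_all
      fix i
      show "i + 1 < m + 1 \<Longrightarrow> (y # x # l) ! (i + 1) < (y # x # l) ! i"
        using D A by (cases i) auto
      show "m + 1 \<le> i + 1 \<and> i + 1 < length (y # x # l) \<Longrightarrow> (y # x # l) ! i < (y # x # l) ! (i + 1)"
        using I m1 by (cases i) auto
    qed
  next
    assume "y < x \<and> in_X1 (x # l)"
    then have "in_X1 (y # x # l)" using in_X1_Cons_Cons by blast
    then show ?thesis unfolding in_X_def in_X1_def
      by (intro exI[of _ 1]) auto
  qed
qed (rule in_X_Cons_Cons_imp)

definition admissible :: "real list \<Rightarrow> bool" where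
  "admissible l \<longleftrightarrow> in_X l \<and> set l \<subseteq> {0..1}"

lemma admissible_Cons_Cons:
  "admissible (x # xs) \<Longrightarrow>
     admissible (y # x # xs) \<longleftrightarrow> y \<in> {0..1} \<and> (x < y \<or> (y < x \<and> in_X1 (x # xs)))"
  unfolding admissible_def using in_X_Cons_Cons by auto

lemma sum_triangle_nat:
  "(\<Sum>j<n. \<Sum>i<n-j. f j i) = (\<Sum>J<n. \<Sum>j\<le>J. f j (J - j))"
  for f :: "nat \<Rightarrow> nat \<Rightarrow> 'a::comm_monoid_add"
proof -
  have "(\<Sum>j<n. \<Sum>i<n-j. f j i) = (\<Sum>(j,i)\<in>{(j,i). j+i<n}. f j i)"
    by (subst sum.Sigma) (auto intro!: sum.cong)
  then show ?thesis by (simp add: sum.triangle_reindex)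
qed

text \<open>The algebraic identity behind splitting \<open>\<omega>\<^sup>k\<^sup>+\<^sup>1\<Lambda>\<close> at the first step acting on the
  leading particle: a creation contributes \<open>a\<^sub>k\<close>, an annihilation closes an arch.\<close>

lemma first_return_convolution:
  fixes E I a :: "nat \<Rightarrow> 'a::comm_semiring_1"
  assumes "E 0 = 1" "E 1 = 0" "\<And>J. E (Suc (Suc J)) = (\<Sum>j\<le>J. I j * E (J - j))"
  shows "(\<Sum>J<Suc k. E J * a (k - J))
       = a k + (\<Sum>j<k. I j * (\<Sum>i<k-1-j. E i * a (k-1-j-1-i)))"
proof (cases k)
  case (Suc n)
  have shift: "(\<Sum>J<Suc (Suc n). g J) = g 0 + (g 1 + (\<Sum>J<n. g (Suc (Suc J))))"
    for g :: "nat \<Rightarrow> 'a"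
    by (simp only: sum.lessThan_Suc_shift One_nat_def)
  have "(\<Sum>j<k. I j * (\<Sum>i<k-1-j. E i * a (k-1-j-1-i)))
      = (\<Sum>j<n. \<Sum>i<n-j. I j * E i * a (n - 1 - (j + i)))"
    using Suc by (simp add: sum_distrib_left mult.assoc algebra_simps)
  also have "\<dots> = (\<Sum>J<n. \<Sum>j\<le>J. I j * E (J - j) * a (n - 1 - J))"
    by (simp add: sum_triangle_nat)
  also have "\<dots> = (\<Sum>J<n. E (Suc (Suc J)) * a (n - 1 - J))"
    by (simp add: assms(3) sum_distrib_right)
  finally show ?thesis
    using shift[of "\<lambda>J. E J * a (Suc n - J)"] assms Suc by simp
qed (simp add: assms)

definition omega_vac :: "nat \<Rightarrow> fock_vec" where
  "omega_vac k = (omega ^^ k) vac"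

lemma omega_vac_0: "omega_vac 0 = vac"
  by (simp add: omega_vac_def)

lemma omega_vac_Suc: "omega_vac (Suc k) l = creation (omega_vac k) l + annihilation (omega_vac k) l"
  by (simp add: omega_vac_def omega_def)

lemma omega_vac_Suc_Nil:
  assumes vac_coeff: "\<And>m. m \<le> k \<Longrightarrow> omega_vac m [] = dyck_weight m 1 True"
    and singleton: "\<And>x. x \<in> {0..1} \<Longrightarrow>
          omega_vac k [x] = (\<Sum>j<k. dyck_weight j x True * omega_vac (k - 1 - j) [])"
  shows "omega_vac (Suc k) [] = dyck_weight (Suc k) 1 True"
proof -
  have "omega_vac (Suc k) [] = integral {0..1} (\<lambda>x. omega_vac k [x])"
    by (simp add: omega_vac_Suc)
  also have "\<dots> = integral {0..1} (\<lambda>x. \<Sum>j<k. dyck_weight j x True * dyck_weight (k - 1 - j) 1 True)"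
    by (rule integral_cong) (simp add: singleton vac_coeff)
  also have "\<dots> = (\<Sum>j<k. integral {0..1} (\<lambda>x. dyck_weight j x True) * dyck_weight (k - 1 - j) 1 True)"
    by (simp add: integral_sum_dyck_weight)
  also have "\<dots> = dyck_weight (Suc k) 1 True"
    by (cases k) (simp_all add: dyck_weight_Suc_Suc arch_weight_def lessThan_Suc_atMost)
  finally show ?thesis .
qed

lemma omega_vac_Suc_Cons:
  assumes expansion: "\<And>m y ys. m \<le> k \<Longrightarrow> admissible (y # ys) \<Longrightarrow>
          omega_vac m (y # ys) = (\<Sum>j<m. dyck_weight j y (in_X1 (y # ys)) * omega_vac (m - 1 - j) ys)"
    and adm: "admissible (x # xs)"
  shows "omega_vac (Suc k) (x # xs)
       = (\<Sum>j<Suc k. dyck_weight j x (in_X1 (x # xs)) * omega_vac (k - j) xs)"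
proof -
  define b where "b = in_X1 (x # xs)"
  define a where "a j = omega_vac (k - 1 - j) (x # xs)" for j
  have x01: "0 \<le> x" "x \<le> 1" and inx: "in_X (x # xs)"
    using adm by (auto simp: admissible_def)
  have below: "omega_vac k (y # x # xs) = (\<Sum>j<k. dyck_weight j y True * a j)"
    if "b" "y \<in> {0..x} - {x}" for y
    using that x01 admissible_Cons_Cons[OF adm] in_X1_Cons_Cons b_def
    by (subst expansion) (auto simp: a_def)
  have above: "omega_vac k (y # x # xs) = (\<Sum>j<k. dyck_weight j y False * a j)"
    if "y \<in> {x..1} - {x}" for y
    using that x01 admissible_Cons_Cons[OF adm] in_X1_Cons_Cons
    by (subst expansion) (auto simp: a_def)
  have "b \<Longrightarrow> integral {0..x} (\<lambda>y. omega_vac k (y # x # xs))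
      = (\<Sum>j<k. integral {0..x} (\<lambda>y. dyck_weight j y True) * a j)"
    using below x01
    by (subst integral_spike[of "{x}" _ "\<lambda>y. \<Sum>j<k. dyck_weight j y True * a j"])
       (auto simp: integral_sum_dyck_weight)
  moreover have "integral {x..1} (\<lambda>y. omega_vac k (y # x # xs))
      = (\<Sum>j<k. integral {x..1} (\<lambda>y. dyck_weight j y False) * a j)"
    using above x01
    by (subst integral_spike[of "{x}" _ "\<lambda>y. \<Sum>j<k. dyck_weight j y False * a j"])
       (auto simp: integral_sum_dyck_weight)
  ultimately have annihilate: "annihilation (omega_vac k) (x # xs) = (\<Sum>j<k. arch_weight j x b * a j)"
    using inx by (cases b) (simp_all add: arch_weight_def b_def[symmetric] sum.distrib algebra_simps)
  have "a j = (\<Sum>i<k-1-j. dyck_weight i x b * omega_vac (k-1-j-1-i) xs)" for j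
    unfolding a_def b_def by (rule expansion[OF _ adm]) simp
  then have "omega_vac (Suc k) (x # xs)
      = omega_vac k xs + (\<Sum>j<k. arch_weight j x b * (\<Sum>i<k-1-j. dyck_weight i x b * omega_vac (k-1-j-1-i) xs))"
    using x01 inx annihilate by (simp add: omega_vac_Suc)
  also have "\<dots> = (\<Sum>j<Suc k. dyck_weight j x b * omega_vac (k - j) xs)"
    by (rule first_return_convolution[symmetric]) (simp_all del: dyck_weight.simps(3) add: dyck_weight_Suc_Suc)
  finally show ?thesis by (simp add: b_def)
qed

lemma omega_vac_expansion:
  "omega_vac k [] = dyck_weight k 1 True \<and>
   (\<forall>x xs. admissible (x # xs) \<longrightarrow>
      omega_vac k (x # xs) = (\<Sum>j<k. dyck_weight j x (in_X1 (x # xs)) * omega_vac (k - 1 - j) xs))"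
proof (induction k rule: less_induct)
  case (less k)
  show ?case
  proof (cases k)
    case 0
    then show ?thesis by (simp add: omega_vac_0 vac_def)
  next
    case (Suc k')
    have expansion: "omega_vac m (y # ys) = (\<Sum>j<m. dyck_weight j y (in_X1 (y # ys)) * omega_vac (m - 1 - j) ys)"
      if "m \<le> k'" "admissible (y # ys)" for m y ys
      using less.IH[of m] Suc that by simp
    have "omega_vac (Suc k') [] = dyck_weight (Suc k') 1 True"
    proof (rule omega_vac_Suc_Nil)
      show "omega_vac m [] = dyck_weight m 1 True" if "m \<le> k'" for m
        using less.IH[of m] Suc that by simp
      show "omega_vac k' [x] = (\<Sum>j<k'. dyck_weight j x True * omega_vac (k' - 1 - j) [])"
        if "x \<in> {0..1}" for x
        using expansion[of k' x "[]"] that by (simp add: admissible_def in_X_singleton in_X1_singleton)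
    qed
    then show ?thesis
      using Suc omega_vac_Suc_Cons[OF expansion] by simp
  qed
qed

lemma vacuum_state_omega_power: "vacuum_state (omega ^^ k) = dyck_weight k 1 True"
  using omega_vac_expansion[of k] by (simp add: vacuum_state_def omega_vac_def)

theorem mainTheorem3:
  fixes n :: nat
  shows "vacuum_state (omega ^^ (2 * n)) = Ppoly n 1
       \<and> vacuum_state (omega ^^ (2 * n + 1)) = 0"
  unfolding vacuum_state_omega_power by (simp add: dyck_weight_even dyck_weight_odd PQpoly_def)

end
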